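(* Let $G$ be a finite group and $H$ a subgroup such that $\mathcal{O}_G(H)$ is Boolean of rank $\ell$, with atoms $A_1,\ldots,A_\ell$. If $|A_i:H|\ge2^i$ for each $i\in\{1,\ldots,\ell\}$, then $\hat\varphi(H,G)\ge2^{\ell-1}$.
   Context: $\mathcal{O}_G(H)=\{K\mid H\le K\le G\}$; Boolean of rank $\ell$ means isomorphic to the lattice of subsets of an $\ell$-set; atoms are the minimal elements of $\mathcal{O}_G(H)\setminus\{H\}$. The dual Euler totient is $\hat\varphi(H,G)=\sum_{K\in\mathcal{O}_G(H)}\mu(H,K)|G:K|$ where $\mu$ is the Möbius function of $\mathcal{O}_G(H)$. *)

theory Defs
  imports Complex_Main "HOL-Algebra.Coset"
begin

definition overgroups :: "('a, 'b) monoid_scheme \<Rightarrow> 'a set \<Rightarrow> 'a set set" where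
  "overgroups G H = {K. subgroup K G \<and> H \<subseteq> K}"

definition rel_index :: "('a, 'b) monoid_scheme \<Rightarrow> 'a set \<Rightarrow> 'a set \<Rightarrow> nat" where
  "rel_index G K H = card ((\<lambda>a. H #>\<^bsub>G\<^esub> a) ` K)"

definition boolean_rank :: "'a set set \<Rightarrow> nat \<Rightarrow> bool" where
  "boolean_rank P l \<longleftrightarrow> (\<exists>f. bij_betw f P (Pow {..<l}) \<and>
      (\<forall>K\<in>P. \<forall>L\<in>P. K \<subseteq> L \<longleftrightarrow> f K \<subseteq> f L))"

definition atoms :: "('a, 'b) monoid_scheme \<Rightarrow> 'a set \<Rightarrow> 'a set set" where
  "atoms G H = {A \<in> overgroups G H - {H}. \<forall>B \<in> overgroups G H - {H}. B \<subseteq> A \<longrightarrow> B = A}"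

text \<open>The recursion is unfolded with fuel card P, which exceeds the length of every strict chain.\<close>
fun mobius_aux :: "nat \<Rightarrow> 'a set \<Rightarrow> ('a \<Rightarrow> 'a \<Rightarrow> bool) \<Rightarrow> 'a \<Rightarrow> 'a \<Rightarrow> int" where
  "mobius_aux 0 P leq x y = (if x = y then 1 else 0)"
| "mobius_aux (Suc n) P leq x y =
     (if x = y then 1
      else if leq x y then - (\<Sum>z\<in>{z\<in>P. leq x z \<and> leq z y \<and> z \<noteq> y}. mobius_aux n P leq x z)
      else 0)"

definition mobius :: "'a set \<Rightarrow> ('a \<Rightarrow> 'a \<Rightarrow> bool) \<Rightarrow> 'a \<Rightarrow> 'a \<Rightarrow> int" where
  "mobius P leq x y = mobius_aux (card P) P leq x y"

definition dual_totient :: "('a, 'b) monoid_scheme \<Rightarrow> 'a set \<Rightarrow> int" where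
  "dual_totient G H = (\<Sum>K\<in>overgroups G H.
      mobius (overgroups G H) (\<subseteq>) H K * int (rel_index G (carrier G) K))"

end

theory Submission
  imports Defs
begin

text \<open>Sending an overgroup to the set of atoms below it identifies \<open>O\<^sub>G(H)\<close> with the subsets
  of \<open>{1..l}\<close>. Then \<open>\<mu>(H, K\<^sub>S) = (-1)\<^bsup>|S|\<^esup>\<close>, so the dual totient is the alternating sum of
  \<open>f(S) = |G : K\<^sub>S|\<close>. For \<open>i \<notin> S\<close> we have \<open>A\<^sub>i \<inter> K\<^sub>S = H\<close>, so the cosets of H in \<open>A\<^sub>i\<close> inject
  into those of \<open>K\<^sub>S\<close> in \<open>K\<^bsub>S \<union> {i}\<^esub>\<close>, giving \<open>f(S) \<ge> 2\<^sup>i f(S \<union> {i})\<close>. Splitting the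
  alternating sum along the largest index shows by induction that it lies between \<open>f({}) / 2\<^sup>l\<close>
  and \<open>f({})\<close>, and \<open>f({}) \<ge> 2\<^sup>l 2\<^bsup>l-1\<^esup>\<close>.\<close>

section \<open>Relative indices of subgroups\<close>

lemma rel_index_mult_card:
  assumes "group G" "subgroup H G" "subgroup K G" "H \<subseteq> K"
  shows "rel_index G K H * card H = card K"
proof -
  let ?K = "G\<lparr>carrier := K\<rparr>"
  have "group ?K"
    using subgroup.subgroup_is_group[OF assms(3,1)] .
  moreover have "subgroup H ?K"
    using group.subgroup_incl assms by blast
  ultimately have "card (rcosets\<^bsub>?K\<^esub> H) * card H = order ?K"
    by (rule group.lagrange)
  moreover have "rcosets\<^bsub>?K\<^esub> H = (\<lambda>a. H #>\<^bsub>G\<^esub> a) ` K"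
    unfolding RCOSETS_def r_coset_def by auto
  ultimately show ?thesis
    unfolding rel_index_def order_def by simp
qed

lemma rel_index_tower:
  assumes "group G" "finite (carrier G)" "subgroup H G" "subgroup K G" "subgroup L G"
    and "H \<subseteq> K" "K \<subseteq> L"
  shows "rel_index G L H = rel_index G L K * rel_index G K H"
proof -
  have "card H > 0"
    using assms(2,3) subgroup.one_closed subgroup.subset
    by (metis card_gt_0_iff empty_iff rev_finite_subset)
  moreover have "rel_index G L H * card H = rel_index G L K * rel_index G K H * card H"
    using rel_index_mult_card assms by (metis mult.assoc subset_trans)
  ultimately show ?thesis
    by simp
qed

lemma (in group) rcos_inter_subgroup:
  assumes "subgroup A G" "subgroup K G" "a \<in> A"
  shows "(K #> a) \<inter> A = (A \<inter> K) #> a"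
proof -
  have "h \<in> A" if "h \<in> K" "h \<otimes> a \<in> A" for h
  proof -
    have "h = (h \<otimes> a) \<otimes> inv a"
      using that assms subgroup.mem_carrier by (metis inv_solve_right m_closed inv_closed)
    then show ?thesis
      using that assms by (metis subgroup.m_closed subgroup.m_inv_closed)
  qed
  then show ?thesis
    using assms unfolding r_coset_def by (auto intro: subgroup.m_closed)
qed

lemma rel_index_inter_le:
  assumes "group G" "finite (carrier G)" "subgroup A G" "subgroup K G" "subgroup L G"
    and "A \<subseteq> L" "K \<subseteq> L"
  shows "rel_index G A (A \<inter> K) \<le> rel_index G L K"
proof -
  have "(\<lambda>a. (A \<inter> K) #>\<^bsub>G\<^esub> a) ` A = (\<lambda>C. C \<inter> A) ` (\<lambda>a. K #>\<^bsub>G\<^esub> a) ` A"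
    using group.rcos_inter_subgroup[OF assms(1,3,4)] by (auto simp: image_image)
  moreover have "finite A" "finite L"
    using assms(2,3,5) subgroup.subset finite_subset by metis+
  ultimately have "rel_index G A (A \<inter> K) \<le> card ((\<lambda>a. K #>\<^bsub>G\<^esub> a) ` A)"
    unfolding rel_index_def by (simp add: card_image_le)
  also have "\<dots> \<le> rel_index G L K"
    unfolding rel_index_def using \<open>finite L\<close> assms(6) by (intro card_mono image_mono) auto
  finally show ?thesis .
qed

lemma rel_index_inter_mult_le:
  assumes "group G" "finite (carrier G)" "subgroup A G" "subgroup K G" "subgroup L G"
    and "A \<subseteq> L" "K \<subseteq> L"
  shows "rel_index G A (A \<inter> K) * rel_index G (carrier G) L \<le> rel_index G (carrier G) K"
proof -
  have "rel_index G (carrier G) K = rel_index G (carrier G) L * rel_index G L K"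
    using assms group.subgroup_self subgroup.subset by (metis rel_index_tower)
  then show ?thesis
    using rel_index_inter_le[OF assms] by simp
qed

lemma rel_index_pos:
  assumes "finite K" "K \<noteq> {}"
  shows "0 < rel_index G K H"
  using assms unfolding rel_index_def by (simp add: card_gt_0_iff)

section \<open>Boolean families of sets\<close>

definition atoms_of :: "'a set set \<Rightarrow> 'a set \<Rightarrow> 'a set set" where
  "atoms_of P b = {a \<in> P - {b}. \<forall>c \<in> P - {b}. c \<subseteq> a \<longrightarrow> c = a}"

lemma atoms_eq_atoms_of: "atoms G H = atoms_of (overgroups G H) H"
  unfolding atoms_def atoms_of_def ..

lemma order_iso_Pow_bot:
  assumes "bij_betw \<phi> P (Pow X)" "\<And>K L. K \<in> P \<Longrightarrow> L \<in> P \<Longrightarrow> K \<subseteq> L \<longleftrightarrow> \<phi> K \<subseteq> \<phi> L"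
    and "b \<in> P" "\<And>K. K \<in> P \<Longrightarrow> b \<subseteq> K"
  shows "\<phi> b = {}"
proof -
  obtain K where K: "K \<in> P" "\<phi> K = {}"
    using assms(1) unfolding bij_betw_def by (metis Pow_bottom imageE)
  then have "\<phi> b \<subseteq> \<phi> K"
    using assms(2)[OF assms(3) K(1)] assms(4)[OF K(1)] by simp
  then show ?thesis
    using K(2) by blast
qed

lemma order_iso_Pow_atoms:
  assumes bij: "bij_betw \<phi> P (Pow X)"
    and iso: "\<And>K L. K \<in> P \<Longrightarrow> L \<in> P \<Longrightarrow> K \<subseteq> L \<longleftrightarrow> \<phi> K \<subseteq> \<phi> L"
    and bot: "b \<in> P" "\<And>K. K \<in> P \<Longrightarrow> b \<subseteq> K"
  shows "bij_betw \<phi> (atoms_of P b) ((\<lambda>x. {x}) ` X)"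
proof -
  have \<phi>b: "\<phi> b = {}"
    by (rule order_iso_Pow_bot[OF bij iso bot])
  have inj: "inj_on \<phi> P" and onto: "\<phi> ` P = Pow X"
    using bij unfolding bij_betw_def by auto
  have singleton: "\<exists>c\<in>P. \<phi> c = {x}" if "x \<in> X" for x
    using that onto by (metis Pow_iff empty_subsetI imageE insert_subset)
  have nonbot: "\<phi> c \<noteq> {}" if "c \<in> P" "c \<noteq> b" for c
    using inj_onD[OF inj _ that(1) bot(1)] \<phi>b that(2) by auto
  have "\<phi> a \<in> (\<lambda>x. {x}) ` X" if a: "a \<in> atoms_of P b" for a
  proof -
    have "a \<in> P" "a \<noteq> b"
      using a unfolding atoms_of_def by auto
    then obtain x where x: "x \<in> \<phi> a"
      using nonbot by blast
    then have "x \<in> X"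
      using \<open>a \<in> P\<close> onto by auto
    then obtain c where c: "c \<in> P" "\<phi> c = {x}"
      using singleton by blast
    then have "c \<subseteq> a" "c \<noteq> b"
      using x iso[OF c(1) \<open>a \<in> P\<close>] \<phi>b by auto
    then have "c = a"
      using a c(1) unfolding atoms_of_def by blast
    then show ?thesis
      using c \<open>x \<in> X\<close> by auto
  qed
  moreover have "{x} \<in> \<phi> ` atoms_of P b" if x: "x \<in> X" for x
  proof -
    obtain a where a: "a \<in> P" "\<phi> a = {x}"
      using singleton x by blast
    have "c = a" if "c \<in> P - {b}" "c \<subseteq> a" for c
    proof -
      have "\<phi> c \<noteq> {}" "\<phi> c \<subseteq> {x}"
        using that a iso nonbot by auto
      then have "\<phi> c = \<phi> a"
        using a(2) by (simp add: subset_singleton_iff)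
      then show ?thesis
        using inj_onD[OF inj] a(1) that(1) by blast
    qed
    then have "a \<in> atoms_of P b"
      using a \<phi>b unfolding atoms_of_def by auto
    then show ?thesis
      using a by auto
  qed
  moreover have "atoms_of P b \<subseteq> P"
    unfolding atoms_of_def by blast
  ultimately show ?thesis
    using inj by (intro bij_betw_imageI) (auto intro: inj_on_subset)
qed

definition Pow_order_iso :: "('i set \<Rightarrow> 'a set) \<Rightarrow> 'i set \<Rightarrow> 'a set set \<Rightarrow> bool" where
  "Pow_order_iso \<kappa> I P \<longleftrightarrow>
    bij_betw \<kappa> (Pow I) P \<and> (\<forall>S T. S \<subseteq> I \<longrightarrow> T \<subseteq> I \<longrightarrow> (\<kappa> S \<subseteq> \<kappa> T \<longleftrightarrow> S \<subseteq> T))"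

lemma Pow_order_isoI:
  assumes "bij_betw \<kappa> (Pow I) P" "\<And>S T. S \<subseteq> I \<Longrightarrow> T \<subseteq> I \<Longrightarrow> \<kappa> S \<subseteq> \<kappa> T \<longleftrightarrow> S \<subseteq> T"
  shows "Pow_order_iso \<kappa> I P"
  unfolding Pow_order_iso_def using assms by (intro conjI allI impI)

lemma Pow_order_iso_bij: "Pow_order_iso \<kappa> I P \<Longrightarrow> bij_betw \<kappa> (Pow I) P"
  unfolding Pow_order_iso_def by (rule conjunct1)

lemma Pow_order_iso_subset_iff:
  "Pow_order_iso \<kappa> I P \<Longrightarrow> S \<subseteq> I \<Longrightarrow> T \<subseteq> I \<Longrightarrow> \<kappa> S \<subseteq> \<kappa> T \<longleftrightarrow> S \<subseteq> T"
  unfolding Pow_order_iso_def by simp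

lemma boolean_rank_atom_coordinates:
  assumes "boolean_rank P l"
    and bot: "b \<in> P" "\<And>K. K \<in> P \<Longrightarrow> b \<subseteq> K"
    and A: "bij_betw A I (atoms_of P b)"
  obtains \<kappa> where "Pow_order_iso \<kappa> I P" and "\<kappa> {} = b" and "\<And>i. i \<in> I \<Longrightarrow> \<kappa> {i} = A i"
proof -
  obtain \<phi> where bij: "bij_betw \<phi> P (Pow {..<l})"
    and iso: "\<And>K L. K \<in> P \<Longrightarrow> L \<in> P \<Longrightarrow> K \<subseteq> L \<longleftrightarrow> \<phi> K \<subseteq> \<phi> L"
    using assms(1) unfolding boolean_rank_def by auto
  txt \<open>Under \<open>\<phi>\<close>, the atom \<open>A i\<close> becomes the singleton \<open>{\<sigma> i}\<close> and \<open>\<kappa> S\<close> becomes \<open>\<sigma> ` S\<close>.\<close>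
  have inj_singleton: "inj_on (\<lambda>x. {x}) {..<l}"
    by (auto intro: inj_onI)
  define \<sigma> where "\<sigma> = inv_into {..<l} (\<lambda>x. {x}) \<circ> (\<phi> \<circ> A)"
  have atoms: "bij_betw \<phi> (atoms_of P b) ((\<lambda>x. {x}) ` {..<l})"
    by (rule order_iso_Pow_atoms[OF bij iso bot])
  have \<sigma>: "bij_betw \<sigma> I {..<l}"
    unfolding \<sigma>_def
    using bij_betw_trans[OF bij_betw_trans[OF A atoms]
        bij_betw_inv_into[OF bij_betw_imageI[OF inj_singleton refl]]] .
  have \<phi>A: "\<phi> (A i) = {\<sigma> i}" if "i \<in> I" for i
  proof -
    have "A i \<in> atoms_of P b"
      using that A by (auto dest: bij_betwE)
    then have "\<phi> (A i) \<in> (\<lambda>x. {x}) ` {..<l}"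
      using atoms by (rule bij_betw_apply[rotated])
    then obtain x where "x < l" "\<phi> (A i) = {x}"
      by auto
    then show ?thesis
      unfolding \<sigma>_def by (simp add: inv_into_f_f[OF inj_singleton])
  qed
  have A_in: "A i \<in> P" if "i \<in> I" for i
    using that A unfolding bij_betw_def atoms_of_def by blast
  have \<sigma>_image: "\<sigma> ` S \<subseteq> \<sigma> ` T \<longleftrightarrow> S \<subseteq> T" if "S \<subseteq> I" "T \<subseteq> I" for S T
  proof
    show "S \<subseteq> T" if "\<sigma> ` S \<subseteq> \<sigma> ` T"
    proof
      fix x assume "x \<in> S"
      then have "\<sigma> x \<in> \<sigma> ` T"
        using that by blast
      then show "x \<in> T"
        using \<open>x \<in> S\<close> \<open>S \<subseteq> I\<close> \<open>T \<subseteq> I\<close> inj_on_image_mem_iff[OF bij_betw_imp_inj_on[OF \<sigma>]]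
        by blast
    qed
  qed (rule image_mono)
  define \<kappa> where "\<kappa> S = inv_into P \<phi> (\<sigma> ` S)" for S
  have \<kappa>: "bij_betw \<kappa> (Pow I) P"
    using bij_betw_trans[OF bij_betw_Pow[OF \<sigma>] bij_betw_inv_into[OF bij]]
    unfolding \<kappa>_def comp_def .
  have \<phi>\<kappa>: "\<phi> (\<kappa> S) = \<sigma> ` S" if "S \<subseteq> I" for S
  proof -
    have "\<sigma> ` S \<in> \<phi> ` P"
      using that bij \<sigma> unfolding bij_betw_def by (metis Pow_iff image_mono)
    then show ?thesis
      unfolding \<kappa>_def by (rule f_inv_into_f)
  qed
  show ?thesis
  proof
    show "Pow_order_iso \<kappa> I P"
    proof (rule Pow_order_isoI[OF \<kappa>])
      fix S T assume ST: "S \<subseteq> I" "T \<subseteq> I"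
      then have "\<kappa> S \<in> P" "\<kappa> T \<in> P"
        using \<kappa> by (auto dest: bij_betwE)
      then have "\<kappa> S \<subseteq> \<kappa> T \<longleftrightarrow> \<phi> (\<kappa> S) \<subseteq> \<phi> (\<kappa> T)"
        by (rule iso)
      then show "\<kappa> S \<subseteq> \<kappa> T \<longleftrightarrow> S \<subseteq> T"
        using ST \<phi>\<kappa> \<sigma>_image by simp
    qed
  next
    show "\<kappa> {} = b"
      using inv_into_f_f[OF bij_betw_imp_inj_on[OF bij] bot(1)] order_iso_Pow_bot[OF bij iso bot]
      unfolding \<kappa>_def by simp
  next
    fix i assume "i \<in> I"
    then show "\<kappa> {i} = A i"
      using inv_into_f_f[OF bij_betw_imp_inj_on[OF bij] A_in] \<phi>A unfolding \<kappa>_def by simp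
  qed
qed

lemma Pow_order_iso_Int:
  assumes ord: "Pow_order_iso \<kappa> I P" and "S \<subseteq> I" "T \<subseteq> I" "\<kappa> S \<inter> \<kappa> T \<in> P"
  shows "\<kappa> S \<inter> \<kappa> T = \<kappa> (S \<inter> T)"
proof -
  note \<kappa> = Pow_order_iso_bij[OF ord] and iso = Pow_order_iso_subset_iff[OF ord]
  obtain U where U: "U \<subseteq> I" "\<kappa> U = \<kappa> S \<inter> \<kappa> T"
    using assms(4) \<kappa> unfolding bij_betw_def by (metis PowD imageE)
  then have "U \<subseteq> S \<inter> T"
    using iso[OF \<open>U \<subseteq> I\<close> \<open>S \<subseteq> I\<close>] iso[OF \<open>U \<subseteq> I\<close> \<open>T \<subseteq> I\<close>] by auto
  then have "\<kappa> S \<inter> \<kappa> T \<subseteq> \<kappa> (S \<inter> T)"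
    using U iso[OF \<open>U \<subseteq> I\<close>, of "S \<inter> T"] \<open>S \<subseteq> I\<close> by auto
  moreover have "\<kappa> (S \<inter> T) \<subseteq> \<kappa> S" "\<kappa> (S \<inter> T) \<subseteq> \<kappa> T"
    using iso[of "S \<inter> T" S] iso[of "S \<inter> T" T] assms(2,3) by auto
  ultimately show ?thesis
    by blast
qed

lemma Pow_order_iso_strict_interval:
  assumes ord: "Pow_order_iso \<kappa> I P" and "S \<subseteq> I"
  shows "{z \<in> P. \<kappa> {} \<subseteq> z \<and> z \<subseteq> \<kappa> S \<and> z \<noteq> \<kappa> S} = \<kappa> ` (Pow S - {S})"
proof -
  note \<kappa> = Pow_order_iso_bij[OF ord] and iso = Pow_order_iso_subset_iff[OF ord]
  show ?thesis
  proof (intro equalityI subsetI)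
    fix z assume z: "z \<in> {z \<in> P. \<kappa> {} \<subseteq> z \<and> z \<subseteq> \<kappa> S \<and> z \<noteq> \<kappa> S}"
    then obtain T where "T \<subseteq> I" "z = \<kappa> T"
      using \<kappa> unfolding bij_betw_def by auto
    then show "z \<in> \<kappa> ` (Pow S - {S})"
      using z iso[OF \<open>T \<subseteq> I\<close> \<open>S \<subseteq> I\<close>] by auto
  next
    fix z assume "z \<in> \<kappa> ` (Pow S - {S})"
    then obtain T where T: "T \<subseteq> S" "T \<noteq> S" "z = \<kappa> T"
      by auto
    then have "T \<subseteq> I"
      using \<open>S \<subseteq> I\<close> by blast
    then show "z \<in> {z \<in> P. \<kappa> {} \<subseteq> z \<and> z \<subseteq> \<kappa> S \<and> z \<noteq> \<kappa> S}"
      using T iso[of "{}" T] iso[OF \<open>T \<subseteq> I\<close> \<open>S \<subseteq> I\<close>] iso[OF \<open>S \<subseteq> I\<close> \<open>T \<subseteq> I\<close>]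
        bij_betw_apply[OF \<kappa>] by auto
  qed
qed

lemma sum_Pow_minus_one_power_card:
  assumes "finite S" "S \<noteq> {}"
  shows "(\<Sum>T\<in>Pow S. (-1::int) ^ card T) = 0"
  using prod_diff_conv_sum[OF assms(1), of "\<lambda>_. 1::int" "\<lambda>_. 1"] assms by (simp add: power_0_left)

lemma mobius_aux_Pow_order_iso:
  assumes ord: "Pow_order_iso \<kappa> I P" and "finite I" and "S \<subseteq> I" "card S \<le> n"
  shows "mobius_aux n P (\<subseteq>) (\<kappa> {}) (\<kappa> S) = (-1) ^ card S"
proof -
  note \<kappa> = Pow_order_iso_bij[OF ord] and iso = Pow_order_iso_subset_iff[OF ord]
  show ?thesis
    using assms(3,4)
  proof (induction n arbitrary: S)
    case 0
    then have "S = {}"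
      using \<open>finite I\<close> by (simp add: finite_subset)
    then show ?case
      by simp
  next
    case (Suc n)
    show ?case
    proof (cases "S = {}")
      case True
      then show ?thesis
        by simp
    next
      case False
      have fin: "finite S"
        using Suc.prems(1) \<open>finite I\<close> finite_subset by blast
      have "\<kappa> {} \<subseteq> \<kappa> S" "\<not> \<kappa> S \<subseteq> \<kappa> {}"
        using False iso[of "{}" S] iso[of S "{}"] Suc.prems(1) by auto
      then have "mobius_aux (Suc n) P (\<subseteq>) (\<kappa> {}) (\<kappa> S)
          = - (\<Sum>z \<in> \<kappa> ` (Pow S - {S}). mobius_aux n P (\<subseteq>) (\<kappa> {}) z)"
        using Pow_order_iso_strict_interval[OF ord Suc.prems(1)] by auto
      also have "\<dots> = - (\<Sum>T \<in> Pow S - {S}. mobius_aux n P (\<subseteq>) (\<kappa> {}) (\<kappa> T))"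
      proof -
        have "inj_on \<kappa> (Pow S - {S})"
          using bij_betw_imp_inj_on[OF \<kappa>] by (rule inj_on_subset) (use Suc.prems(1) in auto)
        then show ?thesis
          by (simp add: sum.reindex)
      qed
      also have "\<dots> = - (\<Sum>T \<in> Pow S - {S}. (-1) ^ card T)"
      proof -
        have "card T \<le> n" if "T \<in> Pow S - {S}" for T
        proof -
          have "card T < card S"
            using that by (intro psubset_card_mono[OF fin]) auto
          then show ?thesis
            using Suc.prems(2) by simp
        qed
        then show ?thesis
          using Suc.IH Suc.prems(1) by (intro arg_cong[where f = uminus] sum.cong) auto
      qed
      also have "\<dots> = (-1) ^ card S"
        using sum_Pow_minus_one_power_card[OF fin False] fin by (simp add: sum_diff1)
      finally show ?thesis .
    qed
  qed
qed

lemma mobius_Pow_order_iso: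
  assumes ord: "Pow_order_iso \<kappa> I P" and "finite I" and "S \<subseteq> I"
  shows "mobius P (\<subseteq>) (\<kappa> {}) (\<kappa> S) = (-1) ^ card S"
proof -
  have "card S \<le> card I"
    using assms(3) \<open>finite I\<close> by (rule card_mono[rotated])
  also have "\<dots> \<le> 2 ^ card I"
    by (simp add: less_imp_le)
  also have "\<dots> = card P"
    using bij_betw_same_card[OF Pow_order_iso_bij[OF ord]] \<open>finite I\<close> by (simp add: card_Pow)
  finally show ?thesis
    unfolding mobius_def by (rule mobius_aux_Pow_order_iso[OF ord \<open>finite I\<close> assms(3)])
qed

section \<open>Alternating sums over a power set\<close>

lemma sum_Pow_insert_alternating:
  fixes f :: "'a set \<Rightarrow> 'b::comm_ring_1"
  assumes "finite A" "a \<notin> A"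
  shows "(\<Sum>S\<in>Pow (insert a A). (-1) ^ card S * f S)
    = (\<Sum>S\<in>Pow A. (-1) ^ card S * f S) - (\<Sum>S\<in>Pow A. (-1) ^ card S * f (insert a S))"
proof -
  have "inj_on (insert a) (Pow A)"
    using assms(2) by (intro inj_onI) (metis PowD insert_ident subset_iff)
  moreover have "card (insert a S) = Suc (card S)" if "S \<in> Pow A" for S
    using that assms finite_subset by (metis PowD card_insert_disjoint subsetD)
  ultimately have "(\<Sum>S\<in>insert a ` Pow A. (-1) ^ card S * f S)
      = - (\<Sum>S\<in>Pow A. (-1) ^ card S * f (insert a S))"
    by (simp add: sum.reindex sum_negf)
  moreover have "Pow A \<inter> insert a ` Pow A = {}"
    using assms(2) by auto
  ultimately show ?thesis
    unfolding Pow_insert using assms(1) by (simp add: sum.union_disjoint)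
qed

lemma alternating_sum_Pow_bounds:
  fixes f :: "nat set \<Rightarrow> real"
  assumes "\<And>S. S \<subseteq> {1..k} \<Longrightarrow> 0 \<le> f S"
    and "\<And>S i. S \<subseteq> {1..k} \<Longrightarrow> i \<in> {1..k} \<Longrightarrow> i \<notin> S \<Longrightarrow> 2 ^ i * f (insert i S) \<le> f S"
  shows "f {} / 2 ^ k \<le> (\<Sum>S\<in>Pow {1..k}. (-1) ^ card S * f S)
    \<and> (\<Sum>S\<in>Pow {1..k}. (-1) ^ card S * f S) \<le> f {}"
  using assms
proof (induction k arbitrary: f)
  case 0
  then show ?case
    by simp
next
  case (Suc k)
  define g where "g S = f (insert (Suc k) S)" for S
  have f: "f {} / 2 ^ k \<le> (\<Sum>S\<in>Pow {1..k}. (-1) ^ card S * f S)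
      \<and> (\<Sum>S\<in>Pow {1..k}. (-1) ^ card S * f S) \<le> f {}"
    by (intro Suc.IH) (auto intro!: Suc.prems)
  have g: "g {} / 2 ^ k \<le> (\<Sum>S\<in>Pow {1..k}. (-1) ^ card S * g S)
      \<and> (\<Sum>S\<in>Pow {1..k}. (-1) ^ card S * g S) \<le> g {}"
    unfolding g_def by (intro Suc.IH) (auto simp: insert_commute intro!: Suc.prems)
  have "0 \<le> g {}" "2 ^ Suc k * g {} \<le> f {}"
    unfolding g_def using Suc.prems(1)[of "{Suc k}"] Suc.prems(2)[of "{}" "Suc k"] by auto
  then have "0 \<le> g {} / 2 ^ k" "g {} \<le> f {} / 2 ^ Suc k" "f {} / 2 ^ k = 2 * (f {} / 2 ^ Suc k)"
    by (simp_all add: pos_le_divide_eq mult.commute)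
  moreover have "{1..Suc k} = insert (Suc k) {1..k}"
    by auto
  then have "(\<Sum>S\<in>Pow {1..Suc k}. (-1) ^ card S * f S)
      = (\<Sum>S\<in>Pow {1..k}. (-1) ^ card S * f S) - (\<Sum>S\<in>Pow {1..k}. (-1) ^ card S * g S)"
    unfolding g_def by (simp only:) (rule sum_Pow_insert_alternating; simp)
  ultimately show ?case
    using f g by linarith
qed

lemma alternating_sum_Pow_lower_bound:
  fixes f :: "nat set \<Rightarrow> real"
  assumes ge1: "\<And>S. S \<subseteq> {1..k} \<Longrightarrow> 1 \<le> f S"
    and decay: "\<And>S i. S \<subseteq> {1..k} \<Longrightarrow> i \<in> {1..k} \<Longrightarrow> i \<notin> S \<Longrightarrow> 2 ^ i * f (insert i S) \<le> f S"
  shows "2 ^ k / 2 \<le> (\<Sum>S\<in>Pow {1..k}. (-1) ^ card S * f S)"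
proof -
  have nonneg: "0 \<le> f S" if "S \<subseteq> {1..k}" for S
    using ge1[OF that] by linarith
  have "f {} / 2 ^ k \<le> (\<Sum>S\<in>Pow {1..k}. (-1) ^ card S * f S)"
    using alternating_sum_Pow_bounds[OF nonneg decay] by (rule conjunct1)
  moreover have "2 ^ k / 2 \<le> f {} / 2 ^ k"
  proof (cases "k = 0")
    case True
    then show ?thesis
      using ge1[of "{}"] by simp
  next
    case False
    have top: "2 ^ (k - 1) \<le> f {k}"
    proof (cases "k = 1")
      case True
      then show ?thesis
        using ge1[of "{1}"] by simp
    next
      case False
      then have "2 ^ (k - 1) * f {k - 1, k} \<le> f {k}" "1 \<le> f {k - 1, k}"
        using decay[of "{k}" "k - 1"] ge1[of "{k - 1, k}"] \<open>k \<noteq> 0\<close> by auto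
      moreover have "(2::real) ^ (k - 1) * 1 \<le> 2 ^ (k - 1) * f {k - 1, k}"
        using \<open>1 \<le> f {k - 1, k}\<close> by (intro mult_left_mono) simp_all
      ultimately show ?thesis
        by linarith
    qed
    have "2 ^ k * f {k} \<le> f {}"
      using decay[of "{}" k] False by simp
    moreover have "2 ^ k * 2 ^ (k - 1) \<le> 2 ^ k * f {k}"
      using top by (intro mult_left_mono) simp_all
    ultimately have "2 ^ k * 2 ^ (k - 1) \<le> f {}"
      by linarith
    moreover have "(2::real) ^ k / 2 = 2 ^ (k - 1)"
      using False by (simp add: power_diff)
    ultimately show ?thesis
      by (simp add: pos_le_divide_eq mult.commute)
  qed
  ultimately show ?thesis
    by linarith
qed

section \<open>The interval of overgroups\<close>

lemma dual_totient_Pow_coordinates: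
  assumes ord: "Pow_order_iso \<kappa> I (overgroups G H)" and "finite I" and "\<kappa> {} = H"
  shows "dual_totient G H = (\<Sum>S\<in>Pow I. (-1) ^ card S * int (rel_index G (carrier G) (\<kappa> S)))"
proof -
  have "dual_totient G H = (\<Sum>S\<in>Pow I.
      mobius (overgroups G H) (\<subseteq>) H (\<kappa> S) * int (rel_index G (carrier G) (\<kappa> S)))"
    unfolding dual_totient_def by (rule sum.reindex_bij_betw[OF Pow_order_iso_bij[OF ord], symmetric])
  also have "\<dots> = (\<Sum>S\<in>Pow I. (-1) ^ card S * int (rel_index G (carrier G) (\<kappa> S)))"
    using mobius_Pow_order_iso[OF ord \<open>finite I\<close>] \<open>\<kappa> {} = H\<close> by (intro sum.cong) auto
  finally show ?thesis .
qed

lemma overgroup_index_decay: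
  assumes "group G" "finite (carrier G)"
    and ord: "Pow_order_iso \<kappa> I (overgroups G H)"
    and "\<kappa> {} = H" and S: "S \<subseteq> I" and i: "i \<in> I" "i \<notin> S"
  shows "rel_index G (\<kappa> {i}) H * rel_index G (carrier G) (\<kappa> (insert i S))
    \<le> rel_index G (carrier G) (\<kappa> S)"
proof -
  note \<kappa> = Pow_order_iso_bij[OF ord] and iso = Pow_order_iso_subset_iff[OF ord]
  have sub: "subgroup (\<kappa> T) G" "H \<subseteq> \<kappa> T" if "T \<subseteq> I" for T
    using bij_betw_apply[OF \<kappa>] that unfolding overgroups_def by auto
  have "{i} \<subseteq> I" "insert i S \<subseteq> I"
    using S i(1) by auto
  then have "\<kappa> {i} \<subseteq> \<kappa> (insert i S)" "\<kappa> S \<subseteq> \<kappa> (insert i S)"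
    using iso S by auto
  moreover have "\<kappa> {i} \<inter> \<kappa> S = H"
  proof -
    have "\<kappa> {i} \<inter> \<kappa> S \<in> overgroups G H"
      using sub \<open>{i} \<subseteq> I\<close> S group.subgroups_Inter_pair[OF assms(1)]
      unfolding overgroups_def by auto
    then show ?thesis
      using Pow_order_iso_Int[OF ord \<open>{i} \<subseteq> I\<close> S] \<open>\<kappa> {} = H\<close> i(2) by simp
  qed
  ultimately show ?thesis
    using rel_index_inter_mult_le[OF assms(1,2)] sub \<open>{i} \<subseteq> I\<close> \<open>insert i S \<subseteq> I\<close> S
    by metis
qed

theorem lemma10p11:
  fixes G :: "('a, 'b) monoid_scheme" and H :: "'a set" and l :: nat and A :: "nat \<Rightarrow> 'a set"
  assumes "group G" and "finite (carrier G)" and "subgroup H G"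
    and "boolean_rank (overgroups G H) l"
    and "bij_betw A {1..l} (atoms G H)"
    and "\<And>i. i \<in> {1..l} \<Longrightarrow> rel_index G (A i) H \<ge> 2 ^ i"
  shows "real_of_int (dual_totient G H) \<ge> (2::real) ^ l / 2"
proof -
  have bot: "H \<in> overgroups G H" "\<And>K. K \<in> overgroups G H \<Longrightarrow> H \<subseteq> K"
    using assms(3) unfolding overgroups_def by auto
  obtain \<kappa> where ord: "Pow_order_iso \<kappa> {1..l} (overgroups G H)" and "\<kappa> {} = H"
    and atoms: "\<And>i. i \<in> {1..l} \<Longrightarrow> \<kappa> {i} = A i"
    using boolean_rank_atom_coordinates[OF assms(4) bot assms(5)[unfolded atoms_eq_atoms_of]] by blast
  define f where "f S = real (rel_index G (carrier G) (\<kappa> S))" for S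
  have totient: "real_of_int (dual_totient G H) = (\<Sum>S\<in>Pow {1..l}. (-1) ^ card S * f S)"
    using dual_totient_Pow_coordinates[OF ord _ \<open>\<kappa> {} = H\<close>] unfolding f_def by simp
  have index_ge1: "1 \<le> f S" for S
    using rel_index_pos[OF assms(2) monoid.carrier_not_empty[OF group.is_monoid[OF assms(1)]]]
    unfolding f_def by (simp add: Suc_le_eq)
  have decay: "2 ^ i * f (insert i S) \<le> f S" if "S \<subseteq> {1..l}" "i \<in> {1..l}" "i \<notin> S" for S i
  proof -
    have "2 ^ i * rel_index G (carrier G) (\<kappa> (insert i S)) \<le> rel_index G (carrier G) (\<kappa> S)"
      using assms(6)[OF that(2)] atoms[OF that(2)]
      by (intro le_trans[OF mult_le_mono1 overgroup_index_decay[OF assms(1,2) ord \<open>\<kappa> {} = H\<close> that]])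
        simp
    from of_nat_mono[OF this, where 'a = real] show ?thesis
      unfolding f_def by simp
  qed
  have "2 ^ l / 2 \<le> (\<Sum>S\<in>Pow {1..l}. (-1) ^ card S * f S)"
    using index_ge1 decay by (intro alternating_sum_Pow_lower_bound)
  then show ?thesis
    unfolding totient .
qed

end
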